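(* Let $U\subseteq L_{\mathrm{up}}$ be a set of up-links such that the sets $P_u$, $u\in U$, are pairwise disjoint. Then the dependency graph of $U$ is a branching, i.e. it contains no directed cycle and every vertex has in-degree at most one.
   Context: Let $(G=(V,E),L,w)$ be a WTAP instance (spanning tree $G$, links $L\subseteq\binom V2$, weights $w>0$) with a fixed root $r\in V$, and let $F\subseteq L$ be a WTAP solution, i.e. $\bigcup_{\ell\in F}P_\ell=E$, where $P_\ell$ is the edge set of the tree path between the endpoints of $\ell$ and $V_\ell$ its vertex set. Ancestors of $v$ are the vertices on the $r$-$v$ path in $G$ (including $r$ and $v$); descendants are defined reciprocally. $\mathrm{apex}(\ell)$ is the vertex of $V_\ell$ closest to $r$. An up-link is a link $\{t,b\}$ with $t$ an ancestor of $b$; $L_{\mathrm{up}}$ is the set of up-links. For $v\in V$ let $B_v=\{\ell\in F\colon\mathrm{apex}(\ell)\text{ is a descendant of }v\}$. For an up-link $u=\{t,b\}$ with $t$ an ancestor of $b$, let $v_u$ be the ancestor of $t$ farthest from $r$ such that $P_u\subseteq\bigcup_{\ell\in B_{v_u}}P_\ell$, and fix $F_u\subseteq B_{v_u}$ inclusion-wise minimal with $P_u\subseteq\bigcup_{\ell\in F_u}P_\ell$. For $\ell\in F_u$ let $P_{u,\ell}=P_u\setminus\bigcup_{\bar\ell\in F_u\setminus\{\ell\}}P_{\bar\ell}$; these sets are nonempty, pairwise disjoint, and each is the edge set of a path. Define $\ell_1\prec_u\ell_2$ iff the edges of $P_{u,\ell_1}$ appear before those of $P_{u,\ell_2}$ on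 the $t$-$b$ path in $G$. If $\ell_1\prec_u\cdots\prec_u\ell_q$ are the links of $F_u$, let $A_u=\{(\ell_i,\ell_{i+1})\colon i=1,\dots,q-1\}$. The dependency graph of a set $U\subseteq L_{\mathrm{up}}$ is the directed graph with vertex set $F$ whose arc set is the disjoint union of the sets $A_u$, $u\in U$. *)

theory Defs
  imports Complex_Main
begin

text \<open>Trees are given by a vertex set V and a set E of 2-element edges; a tree is
  a finite nonempty graph in which any two vertices are joined by exactly one
  simple path (= connected and acyclic).\<close>

definition is_spath :: "'a set set \<Rightarrow> 'a list \<Rightarrow> bool" where
  "is_spath E xs \<longleftrightarrow> xs \<noteq> [] \<and> distinct xs \<and>
     (\<forall>i. Suc i < length xs \<longrightarrow> {xs ! i, xs ! Suc i} \<in> E)"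

definition is_tree :: "'a set \<Rightarrow> 'a set set \<Rightarrow> bool" where
  "is_tree V E \<longleftrightarrow> finite V \<and> V \<noteq> {} \<and>
     (\<forall>e\<in>E. \<exists>a b. a \<in> V \<and> b \<in> V \<and> a \<noteq> b \<and> e = {a, b}) \<and>
     (\<forall>a\<in>V. \<forall>b\<in>V. \<exists>!xs. is_spath E xs \<and> hd xs = a \<and> last xs = b)"

definition tpath :: "'a set set \<Rightarrow> 'a \<Rightarrow> 'a \<Rightarrow> 'a list" where
  "tpath E a b = (THE xs. is_spath E xs \<and> hd xs = a \<and> last xs = b)"

definition path_edges :: "'a list \<Rightarrow> 'a set set" where
  "path_edges xs = {{xs ! i, xs ! Suc i} | i. Suc i < length xs}"

definition lpath :: "'a set set \<Rightarrow> 'a set \<Rightarrow> 'a set set" where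
  "lpath E l = \<Union>{path_edges (tpath E a b) | a b. l = {a, b}}"

definition lverts :: "'a set set \<Rightarrow> 'a set \<Rightarrow> 'a set" where
  "lverts E l = \<Union>{set (tpath E a b) | a b. l = {a, b}}"

definition ancestor :: "'a set set \<Rightarrow> 'a \<Rightarrow> 'a \<Rightarrow> 'a \<Rightarrow> bool" where
  "ancestor E r a v \<longleftrightarrow> a \<in> set (tpath E r v)"

definition depth :: "'a set set \<Rightarrow> 'a \<Rightarrow> 'a \<Rightarrow> nat" where
  "depth E r v = length (tpath E r v)"

definition apex :: "'a set set \<Rightarrow> 'a \<Rightarrow> 'a set \<Rightarrow> 'a" where
  "apex E r l = (ARG_MIN (depth E r) x. x \<in> lverts E l)"

definition is_uplink :: "'a set \<Rightarrow> 'a set set \<Rightarrow> 'a \<Rightarrow> 'a set \<Rightarrow> bool" where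
  "is_uplink V E r u \<longleftrightarrow>
     (\<exists>t b. u = {t, b} \<and> t \<in> V \<and> b \<in> V \<and> t \<noteq> b \<and> ancestor E r t b)"

definition Lup :: "'a set \<Rightarrow> 'a set set \<Rightarrow> 'a \<Rightarrow> 'a set set" where
  "Lup V E r = {u. is_uplink V E r u}"

definition utop :: "'a set set \<Rightarrow> 'a \<Rightarrow> 'a set \<Rightarrow> 'a" where
  "utop E r u = (THE t. \<exists>b. u = {t, b} \<and> t \<noteq> b \<and> ancestor E r t b)"

definition ubot :: "'a set set \<Rightarrow> 'a \<Rightarrow> 'a set \<Rightarrow> 'a" where
  "ubot E r u = (THE b. \<exists>t. u = {t, b} \<and> t \<noteq> b \<and> ancestor E r t b)"

definition Bset :: "'a set set \<Rightarrow> 'a \<Rightarrow> 'a set set \<Rightarrow> 'a \<Rightarrow> 'a set set" where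
  "Bset E r F v = {l \<in> F. ancestor E r v (apex E r l)}"

definition vu :: "'a set set \<Rightarrow> 'a \<Rightarrow> 'a set set \<Rightarrow> 'a set \<Rightarrow> 'a" where
  "vu E r F u = (ARG_MAX (depth E r) v.
      ancestor E r v (utop E r u) \<and> lpath E u \<subseteq> \<Union>(lpath E ` Bset E r F v))"

definition valid_Fu :: "'a set set \<Rightarrow> 'a \<Rightarrow> 'a set set \<Rightarrow> 'a set \<Rightarrow> 'a set set \<Rightarrow> bool" where
  "valid_Fu E r F u S \<longleftrightarrow> S \<subseteq> Bset E r F (vu E r F u) \<and>
     lpath E u \<subseteq> \<Union>(lpath E ` S) \<and>
     (\<forall>S'. S' \<subset> S \<longrightarrow> \<not> lpath E u \<subseteq> \<Union>(lpath E ` S'))"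

definition Pul :: "'a set set \<Rightarrow> 'a set set \<Rightarrow> 'a set \<Rightarrow> 'a set \<Rightarrow> 'a set set" where
  "Pul E S u l = lpath E u - \<Union>(lpath E ` (S - {l}))"

definition edge_pos :: "'a list \<Rightarrow> 'a set \<Rightarrow> nat" where
  "edge_pos xs e = (LEAST i. Suc i < length xs \<and> {xs ! i, xs ! Suc i} = e)"

definition prec_u :: "'a set set \<Rightarrow> 'a \<Rightarrow> 'a set set \<Rightarrow> 'a set \<Rightarrow> 'a set \<Rightarrow> 'a set \<Rightarrow> bool" where
  "prec_u E r S u l1 l2 \<longleftrightarrow>
     (\<forall>e1\<in>Pul E S u l1. \<forall>e2\<in>Pul E S u l2.
        edge_pos (tpath E (utop E r u) (ubot E r u)) e1
          < edge_pos (tpath E (utop E r u) (ubot E r u)) e2)"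

definition Au :: "'a set set \<Rightarrow> 'a \<Rightarrow> 'a set set \<Rightarrow> 'a set \<Rightarrow> ('a set \<times> 'a set) set" where
  "Au E r S u = {(l1, l2). l1 \<in> S \<and> l2 \<in> S \<and> l1 \<noteq> l2 \<and> prec_u E r S u l1 l2 \<and>
      \<not> (\<exists>l3\<in>S. l3 \<noteq> l1 \<and> l3 \<noteq> l2 \<and> prec_u E r S u l1 l3 \<and> prec_u E r S u l3 l2)}"

text \<open>Arc set of the dependency graph of U (with the choice Fu of the sets F_u),
  as a disjoint union: arcs are tagged with the up-link u they come from.\<close>
definition dep_arcs :: "'a set set \<Rightarrow> 'a \<Rightarrow> 'a set set \<Rightarrow> ('a set \<Rightarrow> 'a set set)
    \<Rightarrow> ('a set \<times> 'a set \<times> 'a set) set" where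
  "dep_arcs E r U Fu = {(u, l1, l2). u \<in> U \<and> (l1, l2) \<in> Au E r (Fu u) u}"

definition is_branching :: "'v set \<Rightarrow> ('i \<times> 'v \<times> 'v) set \<Rightarrow> bool" where
  "is_branching N A \<longleftrightarrow> finite A \<and>
     acyclic {(x, y). \<exists>i. (i, x, y) \<in> A} \<and>
     (\<forall>y\<in>N. card {(i, x). (i, x, y) \<in> A} \<le> 1)"

end

theory Submission
  imports Defs
begin

text \<open>Represent every tree edge by its lower endpoint; \<open>parent_edge\<close> is injective on
  \<open>V - {r}\<close>. For a link \<open>{a, c}\<close> the edges of \<open>P_l\<close> become the symmetric difference
  of the ancestor sets of \<open>a\<close> and \<open>c\<close>: it lies strictly below \<open>apex(l)\<close>, the lowest
  common ancestor, and it is convex along every root path. For an up-link \<open>u = {t, b}\<close>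
  they become the ancestors of \<open>b\<close> below \<open>t\<close>, met along the \<open>t\<close>-\<open>b\<close> path in order of
  depth. Convexity makes the private parts \<open>P_{u,l}\<close>, \<open>l \<in> F_u\<close>, totally ordered by
  depth, and if \<open>l1 \<prec>_u l2\<close> then \<open>apex(l2)\<close> is strictly deeper than \<open>apex(l1)\<close> and its
  parent edge lies on \<open>P_u\<close>. So every arc strictly increases the depth of the apex, and
  the arcs entering \<open>l2\<close> all come from the one \<open>u\<close> whose \<open>P_u\<close> contains that edge, where
  \<open>\<prec>_u\<close> is total and leaves \<open>l2\<close> a single predecessor.\<close>

lemma is_spath_take: "is_spath E xs \<Longrightarrow> 0 < n \<Longrightarrow> is_spath E (take n xs)"
  by (auto simp: is_spath_def)

lemma is_spath_drop: "is_spath E xs \<Longrightarrow> n < length xs \<Longrightarrow> is_spath E (drop n xs)"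
  by (auto simp: is_spath_def add.commute)

lemma is_spath_rev:
  assumes "is_spath E xs"
  shows "is_spath E (rev xs)"
  unfolding is_spath_def
proof (intro conjI allI impI)
  show "rev xs \<noteq> []" "distinct (rev xs)"
    using assms by (auto simp: is_spath_def)
  fix i assume i: "Suc i < length (rev xs)"
  define j where "j = length xs - Suc (Suc i)"
  have "{xs ! j, xs ! Suc j} \<in> E"
    using assms i by (auto simp: is_spath_def j_def)
  moreover have "rev xs ! i = xs ! Suc j" "rev xs ! Suc i = xs ! j"
    using i by (auto simp: rev_nth j_def Suc_diff_Suc)
  ultimately show "{rev xs ! i, rev xs ! Suc i} \<in> E"
    by (simp add: insert_commute)
qed

lemma is_spath_append:
  assumes "is_spath E xs" "is_spath E ys" "set xs \<inter> set ys = {}" "{last xs, hd ys} \<in> E"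
  shows "is_spath E (xs @ ys)"
  unfolding is_spath_def
proof (intro conjI allI impI)
  show "xs @ ys \<noteq> []" "distinct (xs @ ys)"
    using assms by (auto simp: is_spath_def)
  have nonempty: "xs \<noteq> []" "ys \<noteq> []"
    using assms by (auto simp: is_spath_def)
  fix i assume i: "Suc i < length (xs @ ys)"
  consider "Suc i < length xs" | "Suc i = length xs" | "length xs \<le> i"
    by linarith
  then show "{(xs @ ys) ! i, (xs @ ys) ! Suc i} \<in> E"
  proof cases
    case 1
    then show ?thesis
      using assms(1) by (simp add: nth_append is_spath_def)
  next
    case 2
    then have "i = length xs - 1"
      by simp
    then show ?thesis
      using assms(4) nonempty 2 by (simp add: nth_append last_conv_nth hd_conv_nth)
  next
    case 3
    then have "Suc (i - length xs) < length ys"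
      using i by auto
    then have "{ys ! (i - length xs), ys ! Suc (i - length xs)} \<in> E"
      using assms(2) by (simp add: is_spath_def)
    then show ?thesis
      using 3 by (simp add: nth_append Suc_diff_le)
  qed
qed

lemma path_edges_Nil [simp]: "path_edges [] = {}"
  and path_edges_singleton [simp]: "path_edges [x] = {}"
  by (auto simp: path_edges_def)

lemma path_edges_Cons_Cons [simp]:
  "path_edges (x # y # zs) = insert {x, y} (path_edges (y # zs))"
proof (rule set_eqI, rule iffI)
  fix e assume "e \<in> path_edges (x # y # zs)"
  then obtain i where i: "Suc i < length (x # y # zs)" "e = {(x # y # zs) ! i, (x # y # zs) ! Suc i}"
    by (auto simp: path_edges_def)
  show "e \<in> insert {x, y} (path_edges (y # zs))"
  proof (cases i)
    case 0
    then show ?thesis using i by simp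
  next
    case (Suc j)
    then have "Suc j < length (y # zs)" "e = {(y # zs) ! j, (y # zs) ! Suc j}"
      using i by auto
    then show ?thesis
      unfolding path_edges_def by blast
  qed
next
  fix e assume "e \<in> insert {x, y} (path_edges (y # zs))"
  then consider "e = {x, y}" | j where "Suc j < length (y # zs)" "e = {(y # zs) ! j, (y # zs) ! Suc j}"
    by (auto simp: path_edges_def)
  then show "e \<in> path_edges (x # y # zs)"
  proof cases
    case 1
    then have "Suc 0 < length (x # y # zs)" "e = {(x # y # zs) ! 0, (x # y # zs) ! Suc 0}"
      by auto
    then show ?thesis
      unfolding path_edges_def by blast
  next
    case 2
    then have "Suc (Suc j) < length (x # y # zs)"
      "e = {(x # y # zs) ! Suc j, (x # y # zs) ! Suc (Suc j)}"
      by auto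
    then show ?thesis
      unfolding path_edges_def by blast
  qed
qed

lemma path_edges_Cons:
  "path_edges (x # zs) = path_edges zs \<union> (if zs = [] then {} else {{x, hd zs}})"
  by (cases zs) auto

lemma path_edges_append:
  "path_edges (xs @ ys) = path_edges xs \<union> path_edges ys \<union>
     (if xs = [] \<or> ys = [] then {} else {{last xs, hd ys}})"
proof (induction xs)
  case Nil
  then show ?case by simp
next
  case (Cons x xs)
  then show ?case
    by (cases xs; cases ys) (auto simp: path_edges_Cons)
qed

lemma path_edges_rev [simp]: "path_edges (rev xs) = path_edges xs"
proof (induction xs)
  case Nil
  then show ?case by simp
next
  case (Cons x xs)
  then show ?case
    by (cases xs) (auto simp: path_edges_append path_edges_Cons insert_commute last_rev)
qed

lemma path_edges_rev_append:
  assumes "xs \<noteq> []"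
  shows "path_edges (rev xs @ ys) = path_edges xs \<union> path_edges (hd xs # ys)"
proof -
  have "path_edges (rev xs @ ys) =
      path_edges xs \<union> path_edges ys \<union> (if ys = [] then {} else {{hd xs, hd ys}})"
    using assms by (simp add: path_edges_append last_rev)
  then show ?thesis
    by (simp add: path_edges_Cons Un_ac)
qed

lemma is_branchingI:
  fixes A :: "('i \<times> 'v \<times> 'v) set" and rank :: "'v \<Rightarrow> nat"
  assumes "finite A"
    and rank: "\<And>i x y. (i, x, y) \<in> A \<Longrightarrow> rank x < rank y"
    and in_arc_unique: "\<And>i x j z y. (i, x, y) \<in> A \<Longrightarrow> (j, z, y) \<in> A \<Longrightarrow> i = j \<and> x = z"
  shows "is_branching N A"
proof -
  have "{(x, y). \<exists>i. (i, x, y) \<in> A} \<subseteq> measure rank"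
    using rank by auto
  then have "acyclic {(x, y). \<exists>i. (i, x, y) \<in> A}"
    using acyclic_subset wf_acyclic wf_measure by blast
  moreover have "card {(i, x). (i, x, y) \<in> A} \<le> 1" for y
    using in_arc_unique
    by (cases "finite {(i, x). (i, x, y) \<in> A}") (auto simp: card_le_Suc0_iff_eq)
  ultimately show ?thesis
    using assms(1) by (simp add: is_branching_def)
qed

locale rooted_tree =
  fixes V :: "'a set" and E :: "'a set set" and r :: 'a
  assumes tree: "is_tree V E" and root: "r \<in> V"
begin

abbreviation rpath :: "'a \<Rightarrow> 'a list" where "rpath v \<equiv> tpath E r v"
abbreviation ancs :: "'a \<Rightarrow> 'a set" where "ancs v \<equiv> set (rpath v)"
abbreviation dep :: "'a \<Rightarrow> nat" where "dep v \<equiv> length (rpath v)"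

lemma edge_doubleton: "e \<in> E \<Longrightarrow> \<exists>a b. a \<in> V \<and> b \<in> V \<and> a \<noteq> b \<and> e = {a, b}"
  using tree by (simp add: is_tree_def)

lemma unique_spath: "a \<in> V \<Longrightarrow> b \<in> V \<Longrightarrow> \<exists>!xs. is_spath E xs \<and> hd xs = a \<and> last xs = b"
  using tree by (simp add: is_tree_def)

lemma spath_subset_V:
  assumes "is_spath E xs" "hd xs \<in> V"
  shows "set xs \<subseteq> V"
proof
  fix x assume "x \<in> set xs"
  then obtain i where i: "i < length xs" "xs ! i = x"
    by (auto simp: in_set_conv_nth)
  show "x \<in> V"
  proof (cases i)
    case 0
    then show ?thesis using assms i by (cases xs) auto
  next
    case (Suc j)
    then have "{xs ! j, xs ! Suc j} \<in> E"
      using assms(1) i(1) by (simp add: is_spath_def)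
    then obtain a b where "a \<in> V" "b \<in> V" "{xs ! j, xs ! Suc j} = {a, b}"
      using edge_doubleton by blast
    then show ?thesis
      using i Suc by (auto simp: doubleton_eq_iff)
  qed
qed

lemma tpath_props:
  assumes "a \<in> V" "b \<in> V"
  shows "is_spath E (tpath E a b)" "hd (tpath E a b) = a" "last (tpath E a b) = b"
  using theI'[OF unique_spath[OF assms]] unfolding tpath_def by auto

lemma tpath_unique:
  assumes "is_spath E xs" "hd xs = a" "last xs = b" "a \<in> V" "b \<in> V"
  shows "tpath E a b = xs"
  unfolding tpath_def using the1_equality[OF unique_spath[OF assms(4,5)]] assms by auto

lemma rpath_props:
  assumes "v \<in> V"
  shows "is_spath E (rpath v)" "hd (rpath v) = r" "last (rpath v) = v" "rpath v \<noteq> []"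
    "ancs v \<subseteq> V" "v \<in> ancs v" "r \<in> ancs v" "1 \<le> dep v"
proof -
  show spath: "is_spath E (rpath v)" "hd (rpath v) = r" "last (rpath v) = v"
    using tpath_props[OF root assms] by auto
  show nonempty: "rpath v \<noteq> []"
    using spath by (auto simp: is_spath_def)
  show "ancs v \<subseteq> V"
    using spath_subset_V spath root by auto
  show "v \<in> ancs v" "r \<in> ancs v"
    using spath nonempty by (metis last_in_set, metis hd_in_set)
  show "1 \<le> dep v"
    using nonempty by (cases "rpath v") auto
qed

lemma rpath_nth:
  assumes "v \<in> V" "i < dep v"
  shows "rpath (rpath v ! i) = take (Suc i) (rpath v)"
proof -
  have "is_spath E (take (Suc i) (rpath v))"
    using is_spath_take rpath_props[OF assms(1)] by auto
  moreover have "hd (take (Suc i) (rpath v)) = r"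
    using rpath_props[OF assms(1)] by (simp add: hd_take)
  moreover have "last (take (Suc i) (rpath v)) = rpath v ! i"
    using rpath_props(4)[OF assms(1)] assms(2) by (simp add: last_conv_nth min_absorb1)
  moreover have "rpath v ! i \<in> V"
    using rpath_props(5)[OF assms(1)] assms(2) nth_mem by blast
  ultimately show ?thesis
    using tpath_unique root by blast
qed

lemma dep_nth: "v \<in> V \<Longrightarrow> i < dep v \<Longrightarrow> dep (rpath v ! i) = Suc i"
  using rpath_nth by simp

lemma ancsD:
  assumes "v \<in> V" "x \<in> ancs v"
  shows "x \<in> V" "rpath x = take (dep x) (rpath v)" "dep x \<le> dep v"
    "rpath v ! (dep x - 1) = x" "ancs x \<subseteq> ancs v" "1 \<le> dep x"
proof -
  show "x \<in> V"
    using rpath_props(5)[OF assms(1)] assms(2) by auto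
  obtain i where i: "i < dep v" "rpath v ! i = x"
    using assms(2) by (auto simp: in_set_conv_nth)
  then have "rpath x = take (Suc i) (rpath v)" "dep x = Suc i"
    using rpath_nth[OF assms(1)] by auto
  then show "rpath x = take (dep x) (rpath v)" "dep x \<le> dep v" "rpath v ! (dep x - 1) = x"
    "1 \<le> dep x" "ancs x \<subseteq> ancs v"
    using i by (auto simp: set_take_subset)
qed

lemma ancestor_trans: "v \<in> V \<Longrightarrow> y \<in> ancs v \<Longrightarrow> x \<in> ancs y \<Longrightarrow> x \<in> ancs v"
  using ancsD(5) by blast

lemma ancestors_chain:
  assumes "v \<in> V" "x \<in> ancs v" "y \<in> ancs v" "dep x \<le> dep y"
  shows "x \<in> ancs y"
proof -
  have x: "rpath v ! (dep x - 1) = x" "1 \<le> dep x"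
    using ancsD[OF assms(1,2)] by auto
  then have k: "dep x - 1 < dep y"
    using assms(4) by simp
  have "rpath y ! (dep x - 1) = take (dep y) (rpath v) ! (dep x - 1)"
    using ancsD(2)[OF assms(1,3)] by metis
  also have "\<dots> = x"
    using k x by simp
  finally show ?thesis
    using k by (metis nth_mem)
qed

lemma ancestor_dep_eq:
  assumes "y \<in> V" "x \<in> ancs y" "dep x = dep y"
  shows "x = y"
proof -
  have "rpath x = rpath y"
    using ancsD(2)[OF assms(1,2)] assms(3) by simp
  then show ?thesis
    using rpath_props(3) assms ancsD(1) by metis
qed

lemma ancestors_chain_eq:
  assumes "v \<in> V" "x \<in> ancs v" "y \<in> ancs v" "dep x = dep y"
  shows "x = y"
  using ancestors_chain[OF assms(1-3)] ancestor_dep_eq ancsD(1)[OF assms(1,3)] assms(4)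
  by simp

lemma ancestor_dep_less_iff:
  assumes "v \<in> V" "x \<in> ancs v" "y \<in> ancs v"
  shows "dep x < dep y \<longleftrightarrow> x \<in> ancs y \<and> x \<noteq> y"
proof
  assume "dep x < dep y"
  then show "x \<in> ancs y \<and> x \<noteq> y"
    using ancestors_chain[OF assms] by auto
next
  assume "x \<in> ancs y \<and> x \<noteq> y"
  then show "dep x < dep y"
    using ancsD(3) ancestor_dep_eq ancsD(1)[OF assms(1,3)] by (metis le_neq_implies_less)
qed

lemma ancestor_antisym:
  assumes "x \<in> V" "y \<in> V" "x \<in> ancs y" "y \<in> ancs x"
  shows "x = y"
  using ancsD(3)[OF assms(2,3)] ancsD(3)[OF assms(1,4)] ancestor_dep_eq[OF assms(2,3)]
  by simp

lemma dep_root: "dep r = 1"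
proof -
  have "tpath E r r = [r]"
    by (rule tpath_unique) (auto simp: is_spath_def root)
  then show ?thesis by simp
qed

lemma dep_ge_2:
  assumes "x \<in> V" "x \<noteq> r"
  shows "2 \<le> dep x"
proof (rule ccontr)
  assume "\<not> 2 \<le> dep x"
  then have "dep x = 1"
    using rpath_props(8)[OF assms(1)] by simp
  then have "hd (rpath x) = last (rpath x)"
    by (cases "rpath x") auto
  then show False
    using rpath_props[OF assms(1)] assms(2) by simp
qed

definition parent :: "'a \<Rightarrow> 'a" where
  "parent x = rpath x ! (dep x - 2)"

definition parent_edge :: "'a \<Rightarrow> 'a set" where
  "parent_edge x = {parent x, x}"

lemma dep_parent:
  assumes "x \<in> V" "x \<noteq> r"
  shows "dep (parent x) = dep x - 1"
  using dep_nth[OF assms(1), of "dep x - 2"] dep_ge_2[OF assms] by (simp add: parent_def)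

lemma parent_edge_nth:
  assumes "v \<in> V" "1 \<le> i" "i < dep v"
  shows "parent_edge (rpath v ! i) = {rpath v ! (i - 1), rpath v ! i}"
  using rpath_nth[OF assms(1,3)] assms by (simp add: parent_edge_def parent_def)

lemma inj_on_parent_edge: "inj_on parent_edge (V - {r})"
proof (rule inj_onI)
  fix x y assume x: "x \<in> V - {r}" and y: "y \<in> V - {r}" and eq: "parent_edge x = parent_edge y"
  show "x = y"
  proof (rule ccontr)
    assume "x \<noteq> y"
    then have "x = parent y" "y = parent x"
      using eq by (auto simp: parent_edge_def doubleton_eq_iff)
    then have "dep x = dep y - 1" "dep y = dep x - 1"
      using dep_parent x y by (metis DiffD1 DiffD2 insertI1)+
    moreover have "2 \<le> dep x"
      using dep_ge_2 x by blast
    ultimately show False by linarith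
  qed
qed

lemma set_drop_rpath:
  assumes "v \<in> V"
  shows "set (drop k (rpath v)) = {x \<in> ancs v. k < dep x}"
proof (rule set_eqI, rule iffI)
  fix x assume "x \<in> set (drop k (rpath v))"
  then obtain j where j: "j < dep v - k" "drop k (rpath v) ! j = x"
    by (auto simp: in_set_conv_nth)
  then have x: "x = rpath v ! (k + j)" "k + j < dep v"
    by auto
  then show "x \<in> {x \<in> ancs v. k < dep x}"
    using dep_nth[OF assms x(2)] by auto
next
  fix x assume x: "x \<in> {x \<in> ancs v. k < dep x}"
  then have "rpath v ! (dep x - 1) = x" "dep x \<le> dep v"
    using ancsD[OF assms] by auto
  then have "drop k (rpath v) ! (dep x - 1 - k) = x" "dep x - 1 - k < length (drop k (rpath v))"
    using x by auto
  then show "x \<in> set (drop k (rpath v))"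
    by (metis nth_mem)
qed

lemma path_edges_drop_rpath:
  assumes "v \<in> V" "k < dep v"
  shows "path_edges (drop k (rpath v)) = parent_edge ` {x \<in> ancs v. Suc k < dep x}"
proof (rule set_eqI, rule iffI)
  fix e assume "e \<in> path_edges (drop k (rpath v))"
  then obtain i where i: "Suc i < dep v - k" "e = {drop k (rpath v) ! i, drop k (rpath v) ! Suc i}"
    by (auto simp: path_edges_def)
  then have lt: "Suc (k + i) < dep v"
    by simp
  have "e = parent_edge (rpath v ! Suc (k + i))"
    using parent_edge_nth[OF assms(1) _ lt] i by simp
  moreover have "rpath v ! Suc (k + i) \<in> {x \<in> ancs v. Suc k < dep x}"
    using dep_nth[OF assms(1) lt] lt by auto
  ultimately show "e \<in> parent_edge ` {x \<in> ancs v. Suc k < dep x}"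
    by blast
next
  fix e assume "e \<in> parent_edge ` {x \<in> ancs v. Suc k < dep x}"
  then obtain x where x: "x \<in> ancs v" "Suc k < dep x" "e = parent_edge x"
    by auto
  define j where "j = dep x - 1"
  have j: "rpath v ! j = x" "j < dep v" "1 \<le> j"
    using ancsD[OF assms(1) x(1)] x(2) by (auto simp: j_def)
  have "e = {rpath v ! (j - 1), rpath v ! j}"
    using parent_edge_nth[OF assms(1) j(3,2)] x(3) j(1) by simp
  also have "\<dots> = {drop k (rpath v) ! (j - 1 - k), drop k (rpath v) ! Suc (j - 1 - k)}"
    using x(2) j by (simp add: j_def Suc_diff_Suc numeral_2_eq_2)
  finally have "e = {drop k (rpath v) ! (j - 1 - k), drop k (rpath v) ! Suc (j - 1 - k)}" .
  moreover have "Suc (j - 1 - k) < length (drop k (rpath v))"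
    using j x(2) by (simp add: j_def)
  ultimately show "e \<in> path_edges (drop k (rpath v))"
    unfolding path_edges_def by blast
qed

lemma ex_lca:
  assumes "a \<in> V" "c \<in> V"
  shows "\<exists>m\<in>V. ancs a \<inter> ancs c = ancs m"
proof -
  have "\<exists>m. m \<in> ancs a \<inter> ancs c \<and> (\<forall>y. y \<in> ancs a \<inter> ancs c \<longrightarrow> dep y \<le> dep m)"
  proof (rule ex_has_greatest_nat[where b = "Suc (dep a)"])
    show "r \<in> ancs a \<inter> ancs c"
      using rpath_props(7) assms by blast
    show "\<forall>y. y \<in> ancs a \<inter> ancs c \<longrightarrow> dep y < Suc (dep a)"
      using ancsD(3)[OF assms(1)] by (simp add: less_Suc_eq_le)
  qed
  then obtain m where m: "m \<in> ancs a" "m \<in> ancs c"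
    "\<And>y. y \<in> ancs a \<Longrightarrow> y \<in> ancs c \<Longrightarrow> dep y \<le> dep m"
    by blast
  have "ancs a \<inter> ancs c = ancs m"
    using ancsD(5) ancestors_chain[OF assms(1) _ m(1)] m assms by blast
  then show ?thesis
    using m ancsD(1)[OF assms(1)] by blast
qed

lemma tpath_lca:
  assumes "a \<in> V" "c \<in> V" "m \<in> V" "ancs a \<inter> ancs c = ancs m"
  shows "tpath E a c = rev (drop (dep m - 1) (rpath a)) @ drop (dep m) (rpath c)"
proof -
  define d where "d = dep m"
  have ma: "m \<in> ancs a" and mc: "m \<in> ancs c"
    using assms rpath_props(6)[OF assms(3)] by auto
  have d: "1 \<le> d" "d \<le> dep a" "d \<le> dep c" "rpath a ! (d - 1) = m" "rpath c ! (d - 1) = m"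
    using ancsD[OF assms(1) ma] ancsD[OF assms(2) mc] by (auto simp: d_def)
  define A where "A = drop (d - 1) (rpath a)"
  define B where "B = drop d (rpath c)"
  have "d - 1 < dep a"
    using d by simp
  then have A: "is_spath E A" "hd A = m" "last A = a" "A \<noteq> []"
    using is_spath_drop rpath_props[OF assms(1)] d by (auto simp: A_def hd_drop_conv_nth)
  show ?thesis
    unfolding d_def[symmetric] A_def[symmetric] B_def[symmetric]
  proof (cases "d = dep c")
    case True
    then have "B = []" "m = c"
      using ancestor_dep_eq[OF assms(2) mc] by (auto simp: B_def d_def)
    then show "tpath E a c = rev A @ B"
      using tpath_unique[OF is_spath_rev[OF A(1)] _ _ assms(1,2)] A by (simp add: hd_rev last_rev)
  next
    case False
    then have dc: "d < dep c"
      using d by simp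
    have B: "is_spath E B" "hd B = rpath c ! d" "last B = c" "B \<noteq> []"
      using is_spath_drop rpath_props[OF assms(2)] dc by (auto simp: B_def hd_drop_conv_nth)
    have "set (rev A) \<inter> set B = {}"
    proof (rule ccontr)
      assume "set (rev A) \<inter> set B \<noteq> {}"
      then obtain x where "x \<in> ancs a" "x \<in> ancs c" "d < dep x"
        using set_drop_rpath[OF assms(1), of "d - 1"] set_drop_rpath[OF assms(2), of d] d
        by (auto simp: A_def B_def)
      then show False
        using assms(4) ancsD(3)[OF assms(3)] d_def by fastforce
    qed
    moreover have "{last (rev A), hd B} \<in> E"
    proof -
      have "Suc (d - 1) < dep c"
        using dc d(1) by simp
      then have "{rpath c ! (d - 1), rpath c ! Suc (d - 1)} \<in> E"
        using rpath_props(1)[OF assms(2)] unfolding is_spath_def by blast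
      then show ?thesis
        using A B d by (simp add: last_rev)
    qed
    ultimately have "is_spath E (rev A @ B)"
      using is_spath_append is_spath_rev A B by blast
    then show "tpath E a c = rev A @ B"
      using tpath_unique[OF _ _ _ assms(1,2)] A B by (simp add: hd_rev)
  qed
qed

lemma ancestors_deeper:
  assumes "v \<in> V" "m \<in> ancs v"
  shows "{x \<in> ancs v. dep m < dep x} = ancs v - ancs m"
  using ancestors_chain[OF assms(1) _ assms(2)] ancsD(3)[OF ancsD(1)[OF assms]] by force

lemma path_edges_tpath:
  assumes "a \<in> V" "c \<in> V" "m \<in> V" "ancs a \<inter> ancs c = ancs m"
  shows "path_edges (tpath E a c) = parent_edge ` ((ancs a \<union> ancs c) - ancs m)"
proof -
  define d where "d = dep m"
  have ma: "m \<in> ancs a" and mc: "m \<in> ancs c"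
    using assms rpath_props(6)[OF assms(3)] by auto
  have d: "1 \<le> d" "d \<le> dep a" "d \<le> dep c" "rpath c ! (d - 1) = m"
    using ancsD[OF assms(1) ma] ancsD[OF assms(2) mc] by (auto simp: d_def)
  have A: "drop (d - 1) (rpath a) \<noteq> []" "hd (drop (d - 1) (rpath a)) = m"
    using ancsD[OF assms(1) ma] d by (auto simp: d_def hd_drop_conv_nth)
  have "m # drop d (rpath c) = drop (d - 1) (rpath c)"
    using Cons_nth_drop_Suc[of "d - 1" "rpath c"] d by simp
  then have "path_edges (tpath E a c) =
      path_edges (drop (d - 1) (rpath a)) \<union> path_edges (drop (d - 1) (rpath c))"
    using tpath_lca[OF assms] path_edges_rev_append[OF A(1)] A(2) by (simp add: d_def)
  also have "\<dots> = parent_edge ` {x \<in> ancs a. d < dep x} \<union> parent_edge ` {x \<in> ancs c. d < dep x}"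
    using path_edges_drop_rpath[OF assms(1), of "d - 1"] path_edges_drop_rpath[OF assms(2), of "d - 1"] d
    by simp
  also have "\<dots> = parent_edge ` ((ancs a \<union> ancs c) - ancs m)"
    using ancestors_deeper[OF assms(1) ma] ancestors_deeper[OF assms(2) mc] by (auto simp: d_def)
  finally show ?thesis .
qed

lemma lpath_link:
  assumes "a \<in> V" "c \<in> V"
  shows "lpath E {a, c} = parent_edge ` ((ancs a \<union> ancs c) - (ancs a \<inter> ancs c))"
proof -
  obtain m where m: "m \<in> V" "ancs a \<inter> ancs c = ancs m"
    using ex_lca assms by blast
  then have "ancs c \<inter> ancs a = ancs m"
    by blast
  then have "path_edges (tpath E a c) = parent_edge ` ((ancs a \<union> ancs c) - (ancs a \<inter> ancs c))"
    "path_edges (tpath E c a) = parent_edge ` ((ancs a \<union> ancs c) - (ancs a \<inter> ancs c))"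
    using path_edges_tpath[OF assms m] path_edges_tpath[OF assms(2,1) m(1)] m(2)
    by (simp_all add: Un_commute)
  moreover have "{path_edges (tpath E a' c') | a' c'. {a, c} = {a', c'}} =
      {path_edges (tpath E a c), path_edges (tpath E c a)}"
    by (auto simp: doubleton_eq_iff)
  ultimately show ?thesis
    unfolding lpath_def by simp
qed

lemma lverts_link: "lverts E {a, c} = set (tpath E a c) \<union> set (tpath E c a)"
  unfolding lverts_def by (auto simp: doubleton_eq_iff)

lemma set_tpath_lca:
  assumes "a \<in> V" "c \<in> V" "m \<in> V" "ancs a \<inter> ancs c = ancs m"
  shows "m \<in> set (tpath E a c)" "x \<in> set (tpath E a c) \<Longrightarrow> x = m \<or> dep m < dep x"
proof -
  have ma: "m \<in> ancs a"
    using assms rpath_props(6)[OF assms(3)] by auto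
  have set_eq: "set (tpath E a c) = {x \<in> ancs a. dep m - 1 < dep x} \<union> {x \<in> ancs c. dep m < dep x}"
    using tpath_lca[OF assms] set_drop_rpath assms by auto
  moreover have "1 \<le> dep m"
    using ancsD(6)[OF assms(1) ma] .
  ultimately show "m \<in> set (tpath E a c)"
    using ma by auto
  show "x = m \<or> dep m < dep x" if "x \<in> set (tpath E a c)"
    using that set_eq \<open>1 \<le> dep m\<close> ancestors_chain_eq[OF assms(1) _ ma] by force
qed

lemma apex_link:
  assumes "a \<in> V" "c \<in> V" "m \<in> V" "ancs a \<inter> ancs c = ancs m"
  shows "apex E r {a, c} = m"
proof -
  let ?apex = "apex E r {a, c}"
  have m: "m \<in> lverts E {a, c}"
    using set_tpath_lca(1)[OF assms] lverts_link by blast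
  have "?apex \<in> lverts E {a, c}"
    unfolding apex_def by (rule arg_min_natI) (rule m)
  moreover have "depth E r ?apex \<le> depth E r m"
    unfolding apex_def by (rule arg_min_nat_le) (rule m)
  moreover have "ancs c \<inter> ancs a = ancs m"
    using assms(4) by blast
  ultimately show ?thesis
    using set_tpath_lca(2)[OF assms] set_tpath_lca(2)[OF assms(2,1,3)]
    by (force simp: lverts_link depth_def)
qed

lemma apex_lca:
  assumes "a \<in> V" "c \<in> V"
  shows "apex E r {a, c} \<in> V" "ancs a \<inter> ancs c = ancs (apex E r {a, c})"
  using ex_lca[OF assms] apex_link[OF assms] by auto

definition lower_ends :: "'a set \<Rightarrow> 'a set" where
  "lower_ends l = {x \<in> V - {r}. parent_edge x \<in> lpath E l}"

lemma lower_ends_link: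
  assumes "a \<in> V" "c \<in> V"
  shows "lower_ends {a, c} = (ancs a \<union> ancs c) - (ancs a \<inter> ancs c)"
proof -
  have "(ancs a \<union> ancs c) - (ancs a \<inter> ancs c) \<subseteq> V - {r}"
    using rpath_props[OF assms(1)] rpath_props[OF assms(2)] by auto
  then show ?thesis
    using inj_on_image_mem_iff[OF inj_on_parent_edge]
    by (auto simp: lower_ends_def lpath_link[OF assms])
qed

lemma proper_ancestor_if_not_ancestor:
  assumes "v \<in> V" "y \<in> ancs v" "m \<in> ancs v" "y \<notin> ancs m"
  shows "m \<in> ancs y" "dep m < dep y"
proof -
  show "dep m < dep y"
    using ancestors_chain[OF assms(1,2,3)] assms(4) by fastforce
  then show "m \<in> ancs y"
    using ancestor_dep_less_iff[OF assms(1,3,2)] by blast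
qed

lemma lower_end_below_apex:
  assumes "a \<in> V" "c \<in> V" "y \<in> lower_ends {a, c}"
  shows "apex E r {a, c} \<in> ancs y" "dep (apex E r {a, c}) < dep y"
proof -
  note lca = apex_lca[OF assms(1,2)]
  have "apex E r {a, c} \<in> ancs a" "apex E r {a, c} \<in> ancs c"
    using lca rpath_props(6)[OF lca(1)] by auto
  moreover have "y \<in> ancs a \<or> y \<in> ancs c" "y \<notin> ancs (apex E r {a, c})"
    using assms(3) lca(2) lower_ends_link[OF assms(1,2)] by auto
  ultimately show "apex E r {a, c} \<in> ancs y" "dep (apex E r {a, c}) < dep y"
    using proper_ancestor_if_not_ancestor[OF assms(1)] proper_ancestor_if_not_ancestor[OF assms(2)]
    by blast+
qed

lemma ancestor_apex_if_not_lower_end: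
  assumes "a \<in> V" "c \<in> V" "z \<in> V" "y \<in> ancs z" "z \<in> lower_ends {a, c}" "y \<notin> lower_ends {a, c}"
  shows "y \<in> ancs (apex E r {a, c})"
proof -
  have "y \<in> ancs a \<or> y \<in> ancs c"
    using assms(5) ancestor_trans[OF assms(1) _ assms(4)] ancestor_trans[OF assms(2) _ assms(4)]
      lower_ends_link[OF assms(1,2)] by auto
  then show ?thesis
    using assms(6) lower_ends_link[OF assms(1,2)] apex_lca(2)[OF assms(1,2)] by auto
qed

lemma lower_ends_convex:
  assumes "a \<in> V" "c \<in> V" "v \<in> V" "x \<in> lower_ends {a, c}" "z \<in> lower_ends {a, c}"
    "x \<in> ancs v" "y \<in> ancs v" "z \<in> ancs v" "dep x \<le> dep y" "dep y \<le> dep z"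
  shows "y \<in> lower_ends {a, c}"
proof (rule ccontr)
  assume "y \<notin> lower_ends {a, c}"
  moreover have "y \<in> ancs z"
    using ancestors_chain[OF assms(3,7,8,10)] .
  ultimately have "y \<in> ancs (apex E r {a, c})"
    using ancestor_apex_if_not_lower_end[OF assms(1,2) ancsD(1)[OF assms(3,8)] _ assms(5)] by blast
  then have "dep y \<le> dep (apex E r {a, c})"
    using ancsD(3) apex_lca(1)[OF assms(1,2)] by blast
  then show False
    using lower_end_below_apex(2)[OF assms(1,2,4)] assms(9) by linarith
qed

lemma uplink_props:
  assumes "t \<in> V" "b \<in> V" "t \<noteq> b" "t \<in> ancs b"
  shows "utop E r {t, b} = t" "ubot E r {t, b} = b"
    "tpath E t b = drop (dep t - 1) (rpath b)"
    "lower_ends {t, b} = ancs b - ancs t" "lpath E {t, b} = parent_edge ` (ancs b - ancs t)"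
proof -
  have "b \<notin> ancs t"
    using ancestor_antisym[OF assms(1,2,4)] assms(3) by blast
  then show "utop E r {t, b} = t" "ubot E r {t, b} = b"
    unfolding utop_def ubot_def using assms
    by (auto simp: ancestor_def doubleton_eq_iff intro!: the_equality)
  have "1 \<le> dep t" "dep t \<le> dep b" "rpath b ! (dep t - 1) = t"
    using ancsD[OF assms(2,4)] by auto
  then show "tpath E t b = drop (dep t - 1) (rpath b)"
    using tpath_unique[OF is_spath_drop[OF rpath_props(1)[OF assms(2)]] _ _ assms(1,2)] rpath_props[OF assms(2)]
    by (simp add: hd_drop_conv_nth)
  have "(ancs t \<union> ancs b) - (ancs t \<inter> ancs b) = ancs b - ancs t"
    using ancsD(5)[OF assms(2,4)] by blast
  then show "lower_ends {t, b} = ancs b - ancs t" "lpath E {t, b} = parent_edge ` (ancs b - ancs t)"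
    using lower_ends_link[OF assms(1,2)] lpath_link[OF assms(1,2)] by simp_all
qed

lemma edge_pos_uplink:
  assumes "t \<in> V" "b \<in> V" "t \<noteq> b" "t \<in> ancs b" "x \<in> ancs b - ancs t"
  shows "dep t < dep x" "edge_pos (tpath E t b) (parent_edge x) = dep x - dep t - 1"
proof -
  define zs where "zs = drop (dep t - 1) (rpath b)"
  have t: "1 \<le> dep t" "dep t \<le> dep b"
    using ancsD[OF assms(2,4)] by auto
  have x: "x \<in> ancs b" "x \<notin> ancs t" "x \<in> V" "x \<noteq> r"
    using assms(5) ancsD(1)[OF assms(2)] rpath_props(7)[OF assms(1)] by auto
  show dep_x: "dep t < dep x"
    using proper_ancestor_if_not_ancestor(2)[OF assms(2) x(1) assms(4) x(2)] .
  have edge: "{zs ! j, zs ! Suc j} = parent_edge (rpath b ! (dep t + j))"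
    and vertex: "rpath b ! (dep t + j) \<in> V - {r}" "dep (rpath b ! (dep t + j)) = Suc (dep t + j)"
    if "Suc j < length zs" for j
  proof -
    have j: "dep t + j < dep b"
      using that t by (simp add: zs_def)
    moreover have "Suc (dep t + j - 1) = dep t + j"
      using t by simp
    then have "zs ! j = rpath b ! (dep t + j - 1)" "zs ! Suc j = rpath b ! (dep t + j)"
      using j t by (simp_all add: zs_def)
    ultimately show "{zs ! j, zs ! Suc j} = parent_edge (rpath b ! (dep t + j))"
      using parent_edge_nth[OF assms(2), of "dep t + j"] t by simp
    show "dep (rpath b ! (dep t + j)) = Suc (dep t + j)"
      using dep_nth[OF assms(2) j] .
    then show "rpath b ! (dep t + j) \<in> V - {r}"
      using rpath_props(5)[OF assms(2)] j t dep_root by (auto simp: nth_mem subset_iff)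
  qed
  have "edge_pos zs (parent_edge x) = dep x - dep t - 1"
    unfolding edge_pos_def
  proof (rule Least_equality)
    let ?i = "dep x - dep t - 1"
    have "Suc ?i < length zs"
      using dep_x ancsD(3)[OF assms(2) x(1)] t by (simp add: zs_def)
    moreover have "rpath b ! (dep t + ?i) = x"
      using ancsD(4)[OF assms(2) x(1)] dep_x by (simp add: Suc_diff_Suc)
    ultimately show "Suc ?i < length zs \<and> {zs ! ?i, zs ! Suc ?i} = parent_edge x"
      using edge by metis
  next
    fix j assume j: "Suc j < length zs \<and> {zs ! j, zs ! Suc j} = parent_edge x"
    then have "rpath b ! (dep t + j) = x"
      using edge vertex(1) x(3,4) inj_onD[OF inj_on_parent_edge] by (metis Diff_iff singletonD)
    then show "dep x - dep t - 1 \<le> j"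
      using vertex(2) j by force
  qed
  then show "edge_pos (tpath E t b) (parent_edge x) = dep x - dep t - 1"
    using uplink_props(3)[OF assms(1-4)] by (simp add: zs_def)
qed

end

locale uplink_cover = rooted_tree +
  fixes t b :: 'a and S :: "'a set set"
  assumes top: "t \<in> V" and bottom: "b \<in> V" and top_ne_bottom: "t \<noteq> b"
    and top_ancestor: "t \<in> set (tpath E r b)"
    and links: "S \<subseteq> {{a, c} | a c. a \<in> V \<and> c \<in> V}"
    and covers: "lpath E {t, b} \<subseteq> \<Union>(lpath E ` S)"
    and minimal: "\<And>S'. S' \<subset> S \<Longrightarrow> \<not> lpath E {t, b} \<subseteq> \<Union>(lpath E ` S')"
begin

lemmas uplink_top_bottom = uplink_props[OF top bottom top_ne_bottom top_ancestor]

text \<open>\<open>P_{u,l}\<close> and \<open>\<prec>_u\<close>, with edges replaced by their lower endpoints and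
  positions on the \<open>t\<close>-\<open>b\<close> path by depths.\<close>

definition private_ends :: "'a set \<Rightarrow> 'a set" where
  "private_ends l = lower_ends {t, b} - \<Union>(lower_ends ` (S - {l}))"

definition prec_dep :: "'a set \<Rightarrow> 'a set \<Rightarrow> bool" where
  "prec_dep l1 l2 \<longleftrightarrow> (\<forall>x\<in>private_ends l1. \<forall>y\<in>private_ends l2. dep x < dep y)"

lemma S_linkE:
  assumes "l \<in> S"
  obtains a c where "l = {a, c}" "a \<in> V" "c \<in> V"
  using links assms by blast

lemma lower_ends_covered: "ancs b - ancs t \<subseteq> \<Union>(lower_ends ` S)"
proof
  fix x assume x: "x \<in> ancs b - ancs t"
  then obtain l where "l \<in> S" "parent_edge x \<in> lpath E l"
    using covers uplink_top_bottom(5) by blast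
  moreover have "x \<in> V - {r}"
    using x uplink_top_bottom(4) by (auto simp: lower_ends_def)
  ultimately show "x \<in> \<Union>(lower_ends ` S)"
    by (auto simp: lower_ends_def)
qed

lemma private_endsD:
  assumes "x \<in> private_ends l"
  shows "x \<in> ancs b - ancs t" "l \<in> S \<Longrightarrow> x \<in> lower_ends l"
    "l' \<in> S \<Longrightarrow> l' \<noteq> l \<Longrightarrow> x \<notin> lower_ends l'"
  using assms lower_ends_covered uplink_top_bottom(4) by (auto simp: private_ends_def)

lemma Pul_eq_private_ends: "Pul E S {t, b} l = parent_edge ` private_ends l"
proof -
  have "lower_ends {t, b} \<subseteq> V - {r}"
    by (auto simp: lower_ends_def)
  then show ?thesis
    using uplink_top_bottom(4,5) by (auto simp: Pul_def private_ends_def lower_ends_def)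
qed

lemma private_ends_nonempty:
  assumes "l \<in> S"
  shows "private_ends l \<noteq> {}"
proof -
  have "Pul E S {t, b} l \<noteq> {}"
    using minimal[of "S - {l}"] assms by (auto simp: Pul_def)
  then show ?thesis
    by (simp add: Pul_eq_private_ends)
qed

lemma prec_u_iff_prec_dep: "prec_u E r S {t, b} l1 l2 \<longleftrightarrow> prec_dep l1 l2"
proof -
  have "edge_pos (tpath E t b) (parent_edge x) < edge_pos (tpath E t b) (parent_edge y) \<longleftrightarrow> dep x < dep y"
    if "x \<in> ancs b - ancs t" "y \<in> ancs b - ancs t" for x y
    using edge_pos_uplink[OF top bottom top_ne_bottom top_ancestor that(1)]
      edge_pos_uplink[OF top bottom top_ne_bottom top_ancestor that(2)] by linarith
  then show ?thesis
    using private_endsD(1)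
    unfolding prec_u_def prec_dep_def uplink_top_bottom(1,2) Pul_eq_private_ends ball_simps by blast
qed

lemma lower_ends_convex_in_S:
  assumes "l \<in> S" "x \<in> lower_ends l" "z \<in> lower_ends l" "x \<in> ancs b" "y \<in> ancs b" "z \<in> ancs b"
    and "dep x \<le> dep y" "dep y \<le> dep z"
  shows "y \<in> lower_ends l"
proof -
  obtain a c where "l = {a, c}" "a \<in> V" "c \<in> V"
    using S_linkE[OF assms(1)] by blast
  then show ?thesis
    using lower_ends_convex[of a c b x z y] assms bottom by simp
qed

lemma prec_dep_if_private_ends_ordered:
  assumes "l1 \<in> S" "l2 \<in> S" "l1 \<noteq> l2" "y1 \<in> private_ends l1" "y2 \<in> private_ends l2"
    and "dep y1 < dep y2"
  shows "prec_dep l1 l2"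
  unfolding prec_dep_def
proof (intro ballI)
  fix x z assume x: "x \<in> private_ends l1" and z: "z \<in> private_ends l2"
  note y1 = private_endsD[OF assms(4)] and y2 = private_endsD[OF assms(5)]
  note x = private_endsD[OF x] and z = private_endsD[OF z]
  show "dep x < dep z"
  proof (rule ccontr)
    \<comment> \<open>otherwise the private parts interleave, and convexity puts \<open>y1\<close> into \<open>P_{l2}\<close>
      or \<open>z\<close> into \<open>P_{l1}\<close>\<close>
    assume "\<not> dep x < dep z"
    then consider "dep z \<le> dep y1" | "dep y1 \<le> dep z" "dep z \<le> dep x"
      by linarith
    then show False
    proof cases
      case 1
      then have "y1 \<in> lower_ends l2"
        using lower_ends_convex_in_S[OF assms(2) z(2) y2(2)] assms(2,6) z(1) y1(1) y2(1) by simp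
      then show False
        using y1(3) assms(2,3) by blast
    next
      case 2
      then have "z \<in> lower_ends l1"
        using lower_ends_convex_in_S[OF assms(1) y1(2) x(2)] assms(1) y1(1) z(1) x(1) by simp
      then show False
        using z(3) assms(1,3) by blast
    qed
  qed
qed

lemma prec_dep_total:
  assumes "l1 \<in> S" "l2 \<in> S" "l1 \<noteq> l2"
  shows "prec_dep l1 l2 \<or> prec_dep l2 l1"
proof -
  obtain y1 y2 where y: "y1 \<in> private_ends l1" "y2 \<in> private_ends l2"
    using private_ends_nonempty assms by blast
  have "y1 \<noteq> y2"
    using private_endsD(2)[OF y(2) assms(2)] private_endsD(3)[OF y(1) assms(2)] assms(3) by blast
  then have "dep y1 \<noteq> dep y2"
    using ancestors_chain_eq[OF bottom] private_endsD(1) y by blast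
  then show ?thesis
    using prec_dep_if_private_ends_ordered[OF assms y] 
      prec_dep_if_private_ends_ordered[OF assms(2,1) assms(3)[symmetric] y(2,1)]
    by linarith
qed

lemma prec_dep_apex:
  assumes "l1 \<in> S" "l2 \<in> S" "l1 \<noteq> l2" "prec_dep l1 l2"
  shows "dep (apex E r l1) < dep (apex E r l2)" "apex E r l2 \<in> ancs b - ancs t"
proof -
  obtain a1 c1 where l1: "l1 = {a1, c1}" "a1 \<in> V" "c1 \<in> V"
    using S_linkE[OF assms(1)] by blast
  obtain a2 c2 where l2: "l2 = {a2, c2}" "a2 \<in> V" "c2 \<in> V"
    using S_linkE[OF assms(2)] by blast
  obtain y z where y: "y \<in> private_ends l1" and z: "z \<in> private_ends l2"
    using private_ends_nonempty assms by blast
  have "dep y < dep z"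
    using assms(4) y z by (auto simp: prec_dep_def)
  then have y_z: "y \<in> ancs z"
    using ancestors_chain[OF bottom] private_endsD(1) y z by force
  have z_V: "z \<in> V"
    using ancsD(1)[OF bottom] private_endsD(1)[OF z] by blast
  have y_apex2: "y \<in> ancs (apex E r l2)"
    using ancestor_apex_if_not_lower_end[OF l2(2,3) z_V y_z] l2(1)
      private_endsD(2)[OF z assms(2)] private_endsD(3)[OF y assms(2)] assms(3) by auto
  have apex2_z: "apex E r l2 \<in> ancs z"
    using lower_end_below_apex(1)[OF l2(2,3)] l2(1) private_endsD(2)[OF z assms(2)] by simp
  have "dep y \<le> dep (apex E r l2)"
    using ancsD(3)[OF ancsD(1)[OF z_V apex2_z] y_apex2] .
  then show "dep (apex E r l1) < dep (apex E r l2)"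
    using lower_end_below_apex(2)[OF l1(2,3)] l1(1) private_endsD(2)[OF y assms(1)] by fastforce
  have "apex E r l2 \<in> ancs b"
    using ancestor_trans[OF bottom _ apex2_z] private_endsD(1)[OF z] by blast
  moreover have "apex E r l2 \<notin> ancs t"
    using ancestor_trans[OF top _ y_apex2] private_endsD(1)[OF y] by blast
  ultimately show "apex E r l2 \<in> ancs b - ancs t"
    by blast
qed

lemma Au_iff:
  "(l1, l2) \<in> Au E r S {t, b} \<longleftrightarrow> l1 \<in> S \<and> l2 \<in> S \<and> l1 \<noteq> l2 \<and> prec_dep l1 l2 \<and>
     \<not> (\<exists>l3\<in>S. l3 \<noteq> l1 \<and> l3 \<noteq> l2 \<and> prec_dep l1 l3 \<and> prec_dep l3 l2)"
  unfolding Au_def prec_u_iff_prec_dep by simp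

lemma Au_arc:
  assumes "(l1, l2) \<in> Au E r S {t, b}"
  shows "l1 \<in> S" "l2 \<in> S" "dep (apex E r l1) < dep (apex E r l2)"
    "parent_edge (apex E r l2) \<in> lpath E {t, b}"
proof -
  have "l1 \<in> S" "l2 \<in> S" "l1 \<noteq> l2" "prec_dep l1 l2"
    using assms by (simp_all add: Au_iff)
  then show "l1 \<in> S" "l2 \<in> S" "dep (apex E r l1) < dep (apex E r l2)"
    "parent_edge (apex E r l2) \<in> lpath E {t, b}"
    using prec_dep_apex uplink_top_bottom(5) by blast+
qed

lemma Au_in_arc_unique:
  assumes "(l1, l2) \<in> Au E r S {t, b}" "(l1', l2) \<in> Au E r S {t, b}"
  shows "l1 = l1'"
proof (rule ccontr)
  assume "l1 \<noteq> l1'"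
  then show False
    using prec_dep_total[of l1 l1'] assms unfolding Au_iff by blast
qed

end

context rooted_tree
begin

lemma uplink_cover_if_valid_Fu:
  assumes "u \<in> Lup V E r" "F \<subseteq> {{a, c} | a c. a \<in> V \<and> c \<in> V}" "valid_Fu E r F u S"
  obtains t b where "u = {t, b}" "uplink_cover V E r t b S" "S \<subseteq> F"
proof -
  obtain t b where tb: "u = {t, b}" "t \<in> V" "b \<in> V" "t \<noteq> b" "t \<in> ancs b"
    using assms(1) by (auto simp: Lup_def is_uplink_def ancestor_def)
  have "S \<subseteq> F"
    using assms(3) by (auto simp: valid_Fu_def Bset_def)
  moreover have "uplink_cover V E r t b S"
    using rooted_tree_axioms tb \<open>S \<subseteq> F\<close> assms(2,3)
    by (auto simp: uplink_cover_def uplink_cover_axioms_def valid_Fu_def)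
  ultimately show ?thesis
    using that tb(1) by blast
qed

lemma dep_arcsD:
  assumes "U \<subseteq> Lup V E r" "F \<subseteq> {{a, c} | a c. a \<in> V \<and> c \<in> V}"
    and "\<forall>u\<in>U. valid_Fu E r F u (Fu u)" "(u, l1, l2) \<in> dep_arcs E r U Fu"
  shows "u \<in> U" "l1 \<in> F" "l2 \<in> F" "dep (apex E r l1) < dep (apex E r l2)"
    "parent_edge (apex E r l2) \<in> lpath E u"
proof -
  have u: "u \<in> U" "(l1, l2) \<in> Au E r (Fu u) u"
    using assms(4) by (simp_all add: dep_arcs_def)
  obtain t b where "u = {t, b}" "uplink_cover V E r t b (Fu u)" "Fu u \<subseteq> F"
    using uplink_cover_if_valid_Fu[of u F "Fu u"] u(1) assms(1-3) by blast
  then show "u \<in> U" "l1 \<in> F" "l2 \<in> F" "dep (apex E r l1) < dep (apex E r l2)"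
    "parent_edge (apex E r l2) \<in> lpath E u"
    using uplink_cover.Au_arc[of V E r t b "Fu u" l1 l2] u by auto
qed

lemma dep_arcs_in_arc_unique:
  assumes "U \<subseteq> Lup V E r" "F \<subseteq> {{a, c} | a c. a \<in> V \<and> c \<in> V}"
    and "\<forall>u\<in>U. valid_Fu E r F u (Fu u)"
    and "(u, l1, l2) \<in> dep_arcs E r U Fu" "(u, l1', l2) \<in> dep_arcs E r U Fu"
  shows "l1 = l1'"
proof -
  have u: "u \<in> U" "(l1, l2) \<in> Au E r (Fu u) u" "(l1', l2) \<in> Au E r (Fu u) u"
    using assms(4,5) by (simp_all add: dep_arcs_def)
  obtain t b where "u = {t, b}" "uplink_cover V E r t b (Fu u)"
    using uplink_cover_if_valid_Fu[of u F "Fu u"] u(1) assms(1-3) by blast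
  then show ?thesis
    using uplink_cover.Au_in_arc_unique[of V E r t b "Fu u" l1 l2 l1'] u by auto
qed

end

theorem lemma10:
  fixes V :: "'a set" and E :: "'a set set" and r :: 'a
    and L :: "'a set set" and w :: "'a set \<Rightarrow> real"
    and F :: "'a set set" and U :: "'a set set" and Fu :: "'a set \<Rightarrow> 'a set set"
  assumes tree: "is_tree V E"
    and root: "r \<in> V"
    and links: "L \<subseteq> {{a, b} | a b. a \<in> V \<and> b \<in> V \<and> a \<noteq> b}"
    and weights: "\<forall>l\<in>L. w l > 0"
    and FL: "F \<subseteq> L"
    and Fsol: "\<Union>(lpath E ` F) = E"
    and Uup: "U \<subseteq> Lup V E r"
    and Udisj: "\<forall>u1\<in>U. \<forall>u2\<in>U. u1 \<noteq> u2 \<longrightarrow> lpath E u1 \<inter> lpath E u2 = {}"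
    and Fu: "\<forall>u\<in>U. valid_Fu E r F u (Fu u)"
  shows "is_branching F (dep_arcs E r U Fu)"
proof -
  interpret rooted_tree V E r
    using tree root by unfold_locales
  have F_links: "F \<subseteq> {{a, c} | a c. a \<in> V \<and> c \<in> V}"
    using FL links by blast
  note arc = dep_arcsD[OF Uup F_links Fu]
  have "finite V"
    using tree by (simp add: is_tree_def)
  moreover have "U \<subseteq> Pow V" "F \<subseteq> Pow V"
    using Uup FL links by (auto simp: Lup_def is_uplink_def)
  ultimately have "finite (U \<times> F \<times> F)"
    by (meson finite_Pow_iff finite_SigmaI finite_subset)
  moreover have "dep_arcs E r U Fu \<subseteq> U \<times> F \<times> F"
  proof
    fix a assume a: "a \<in> dep_arcs E r U Fu"
    then obtain u x y where "a = (u, x, y)"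
      by (cases a) blast
    then show "a \<in> U \<times> F \<times> F"
      using arc(1-3) a by blast
  qed
  moreover have "u = u' \<and> x = x'"
    if "(u, x, y) \<in> dep_arcs E r U Fu" "(u', x', y) \<in> dep_arcs E r U Fu" for u x u' x' y
  proof -
    have "u = u'"
      using arc(1,5)[OF that(1)] arc(1,5)[OF that(2)] Udisj by blast
    then show ?thesis
      using dep_arcs_in_arc_unique[OF Uup F_links Fu] that by blast
  qed
  ultimately show ?thesis
    using arc(4) by (intro is_branchingI[where rank = "\<lambda>l. dep (apex E r l)"]) (auto intro: finite_subset)
qed

end
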